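(* Let $\mathcal X\subseteq\mathbb R^m$ be nonempty, convex and compact with diameter $D>0$, $F:\mathbb R^m\to\mathbb R^r$ affine, $C\in\mathbb R^{r\times n}$ with nonzero columns, $\Theta(x,y)=\frac12\|F(x)-Cy\|^2$, and $L>0$ such that for every $y\in\{0,1\}^n$, $\Theta(\cdot,y)$ is $L$-Lipschitz on $\mathcal X$ and $\|\nabla_x\Theta(x,y)\|\le L$ on $\mathcal X$. Given $\epsilon>0$ set $K=\lceil 9((D^2+L^2)/(2\epsilon))^2\rceil$, choose $x_0\in\mathcal X$, and for $k=0,\dots,K-1$ let $y_k=\operatorname{DG}(\Theta(x_k,\cdot))$, $x_{k+1}=\operatorname{Proj}_{\mathcal X}(x_k-K^{-1/2}\nabla_x\Theta(x_k,y_k))$; output $\hat x=\frac1K\sum_{k=0}^{K-1}x_k$ and $\hat y=\operatorname{DG}(\Theta(\hat x,\cdot))$. If $C$ is obtuse, $(\hat x,\hat y)$ is a $(\frac13,\epsilon)$-approximate minimax point of $\min_{x\in\mathcal X}\max_{y\in\{0,1\}^n}\Theta(x,y)$. If the columns of $C$ are mutually orthogonal, $(\hat x,\hat y)$ is an $\epsilon$-global minimax point of that problem.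
   Context: $C=(c_1,\dots,c_n)$ is obtuse if $c_i^\top c_j\le0$ for all $i\neq j$. $\operatorname{Proj}_{\mathcal X}$ is Euclidean projection. $\operatorname{DG}(\Theta(x,\cdot))$ is the double greedy procedure: $\underline y^0=\mathbf 0$, $\overline y^0=\mathbf 1$; for $k=1,\dots,n$, with $a=\Theta(x,\underline y^{k-1}+\mathbf e_k)-\Theta(x,\underline y^{k-1})$ and $b=\Theta(x,\overline y^{k-1}-\mathbf e_k)-\Theta(x,\overline y^{k-1})$, if $a\ge b$ set $\underline y^k=\underline y^{k-1}+\mathbf e_k,\ \overline y^k=\overline y^{k-1}$, else $\underline y^k=\underline y^{k-1},\ \overline y^k=\overline y^{k-1}-\mathbf e_k$; return $\underline y^n(=\overline y^n)$. With $\mathcal Y=\{0,1\}^n$, $(x^*,y^* )\in\mathcal X\times\mathcal Y$ is an $(\alpha,\epsilon)$-approximate minimax point if $\alpha\max_{y\in\mathcal Y}\Theta(x^*,y)\le\Theta(x^*,y^* )\le\frac1\alpha\min_{x\in\mathcal X}\max_{y\in\mathcal Y}\Theta(x,y)+\epsilon$; an $\epsilon$-global minimax point is an $(1,\epsilon)$-approximate minimax point. *)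

theory Defs
  imports "HOL-Analysis.Analysis"
begin

text \<open>Binary vectors y in {0,1}^n, represented as functions nat => real that are
  0/1 on coordinates 0..n-1 and 0 elsewhere. Coordinate k of the paper (1-based) is
  index k-1 here.\<close>
definition binvecs :: "nat \<Rightarrow> (nat \<Rightarrow> real) set" where
  "binvecs n = {y. (\<forall>j<n. y j = 0 \<or> y j = 1) \<and> (\<forall>j\<ge>n. y j = 0)}"

definition matvec :: "(nat \<Rightarrow> 'r::real_vector) \<Rightarrow> nat \<Rightarrow> (nat \<Rightarrow> real) \<Rightarrow> 'r" where
  "matvec c n y = (\<Sum>j<n. y j *\<^sub>R c j)"

definition Theta :: "('m \<Rightarrow> 'r::real_normed_vector) \<Rightarrow> (nat \<Rightarrow> 'r) \<Rightarrow> nat \<Rightarrow> 'm \<Rightarrow> (nat \<Rightarrow> real) \<Rightarrow> real" where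
  "Theta F c n x y = (1/2) * (norm (F x - matvec c n y))\<^sup>2"

definition grad :: "('a::real_inner \<Rightarrow> real) \<Rightarrow> 'a \<Rightarrow> 'a" where
  "grad g x = (THE v. (g has_derivative (\<lambda>h. v \<bullet> h)) (at x))"

fun dg_state :: "((nat \<Rightarrow> real) \<Rightarrow> real) \<Rightarrow> nat \<Rightarrow> nat \<Rightarrow> (nat \<Rightarrow> real) \<times> (nat \<Rightarrow> real)" where
  "dg_state f n 0 = ((\<lambda>_. 0), (\<lambda>j. if j < n then 1 else 0))"
| "dg_state f n (Suc k) =
     (let lo = fst (dg_state f n k); up = snd (dg_state f n k);
          a = f (lo(k := 1)) - f lo;
          b = f (up(k := 0)) - f up
      in if a \<ge> b then (lo(k := 1), up) else (lo, up(k := 0)))"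

definition DG :: "((nat \<Rightarrow> real) \<Rightarrow> real) \<Rightarrow> nat \<Rightarrow> nat \<Rightarrow> real" where
  "DG f n = fst (dg_state f n n)"

definition obtuse :: "(nat \<Rightarrow> 'r::real_inner) \<Rightarrow> nat \<Rightarrow> bool" where
  "obtuse c n \<longleftrightarrow> (\<forall>i<n. \<forall>j<n. i \<noteq> j \<longrightarrow> c i \<bullet> c j \<le> 0)"

definition approx_minimax ::
  "('x \<Rightarrow> 'y \<Rightarrow> real) \<Rightarrow> 'x set \<Rightarrow> 'y set \<Rightarrow> real \<Rightarrow> real \<Rightarrow> 'x \<Rightarrow> 'y \<Rightarrow> bool" where
  "approx_minimax \<Theta> X Y \<alpha> \<epsilon> xs ys \<longleftrightarrow>
     xs \<in> X \<and> ys \<in> Y \<and>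
     \<alpha> * (SUP y\<in>Y. \<Theta> xs y) \<le> \<Theta> xs ys \<and>
     \<Theta> xs ys \<le> (1/\<alpha>) * (INF x\<in>X. SUP y\<in>Y. \<Theta> x y) + \<epsilon>"

primrec gd_iter :: "'m::{real_inner,heine_borel} set \<Rightarrow> ('m \<Rightarrow> (nat \<Rightarrow> real) \<Rightarrow> real) \<Rightarrow> nat \<Rightarrow> nat \<Rightarrow> 'm \<Rightarrow> nat \<Rightarrow> 'm" where
  "gd_iter X \<Theta> n K x0 0 = x0"
| "gd_iter X \<Theta> n K x0 (Suc k) =
     (let xk = gd_iter X \<Theta> n K x0 k; yk = DG (\<Theta> xk) n
      in closest_point X (xk - (1 / sqrt (real K)) *\<^sub>R grad (\<lambda>x. \<Theta> x yk) xk))"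

end

theory Submission
  imports Defs
begin

text \<open>
  Obtuse columns make \<open>\<Theta>(x, \<cdot>)\<close> submodular on the cube and orthogonal columns make it modular,
  so double greedy returns a \<open>1/3\<close>-approximate, respectively exact, maximiser of \<open>\<Theta>(x, \<cdot>)\<close>.
  Each \<open>\<Theta>(\<cdot>, y)\<close> is convex with gradient bounded by \<open>L\<close>, so projected gradient descent
  against the double-greedy responses \<open>y\<^sub>k\<close> has regret at most \<open>sqrt K (D\<^sup>2 + L\<^sup>2) / 2\<close>
  with respect to every \<open>z \<in> X\<close>. Jensen's inequality for the convex function
  \<open>max\<^sub>y \<Theta>(\<cdot>, y)\<close> at the average, the approximation guarantee and the regret bound together give
  \<open>\<alpha> max\<^sub>y \<Theta>(xhat, y) \<le> max\<^sub>y \<Theta>(z, y) + (D\<^sup>2 + L\<^sup>2) / (2 sqrt K)\<close>,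
  and the choice of \<open>K\<close> makes the error at most \<open>\<epsilon>/3 \<le> \<alpha> \<epsilon>\<close>.
\<close>

lemma binvecs_fun_upd:
  "y \<in> binvecs n \<Longrightarrow> k < n \<Longrightarrow> v = 0 \<or> v = 1 \<Longrightarrow> y(k := v) \<in> binvecs n"
  by (auto simp: binvecs_def)

lemma binvecs_bounds: "y \<in> binvecs n \<Longrightarrow> 0 \<le> y j \<and> y j \<le> 1"
  unfolding binvecs_def by (cases "j < n") force+

lemma finite_binvecs: "finite (binvecs n)"
proof -
  have "binvecs n \<subseteq> (\<lambda>S j. if j \<in> S then 1 else 0) ` Pow {..<n}"
  proof
    fix y assume y: "y \<in> binvecs n"
    have "y = (\<lambda>j. if j \<in> {j. j < n \<and> y j = 1} then 1 else 0)"
    proof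
      fix j show "y j = (if j \<in> {j. j < n \<and> y j = 1} then 1 else 0)"
        using y unfolding binvecs_def by (cases "j < n") auto
    qed
    then show "y \<in> (\<lambda>S j. if j \<in> S then 1 else 0) ` Pow {..<n}" by blast
  qed
  then show ?thesis by (rule finite_subset) simp
qed

lemma binvecs_nonempty: "binvecs n \<noteq> {}"
proof -
  have "(\<lambda>_. 0) \<in> binvecs n" by (simp add: binvecs_def)
  then show ?thesis by blast
qed

definition submodular_on_binvecs :: "((nat \<Rightarrow> real) \<Rightarrow> real) \<Rightarrow> nat \<Rightarrow> bool" where
  "submodular_on_binvecs f n \<longleftrightarrow> (\<forall>y\<in>binvecs n. \<forall>y'\<in>binvecs n. \<forall>k<n.
     (\<forall>j. y j \<le> y' j) \<longrightarrow> y' k = 0 \<longrightarrow> f (y'(k := 1)) - f y' \<le> f (y(k := 1)) - f y)"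

definition modular_on_binvecs :: "((nat \<Rightarrow> real) \<Rightarrow> real) \<Rightarrow> nat \<Rightarrow> bool" where
  "modular_on_binvecs f n \<longleftrightarrow> (\<forall>y\<in>binvecs n. \<forall>y'\<in>binvecs n. \<forall>k<n.
     y k = 0 \<longrightarrow> y' k = 0 \<longrightarrow> f (y'(k := 1)) - f y' = f (y(k := 1)) - f y)"

lemma submodular_on_binvecsD:
  "submodular_on_binvecs f n \<Longrightarrow> y \<in> binvecs n \<Longrightarrow> y' \<in> binvecs n \<Longrightarrow> k < n \<Longrightarrow>
    (\<And>j. y j \<le> y' j) \<Longrightarrow> y' k = 0 \<Longrightarrow> f (y'(k := 1)) - f y' \<le> f (y(k := 1)) - f y"
  unfolding submodular_on_binvecs_def by blast

lemma modular_on_binvecsD: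
  "modular_on_binvecs f n \<Longrightarrow> y \<in> binvecs n \<Longrightarrow> y' \<in> binvecs n \<Longrightarrow> k < n \<Longrightarrow>
    y k = 0 \<Longrightarrow> y' k = 0 \<Longrightarrow> f (y'(k := 1)) - f y' = f (y(k := 1)) - f y"
  unfolding modular_on_binvecs_def by blast

lemma dg_state_invariant:
  assumes "k \<le> n"
  shows "fst (dg_state f n k) \<in> binvecs n \<and> snd (dg_state f n k) \<in> binvecs n
    \<and> (\<forall>j\<ge>k. fst (dg_state f n k) j = 0) \<and> (\<forall>j. k \<le> j \<and> j < n \<longrightarrow> snd (dg_state f n k) j = 1)
    \<and> (\<forall>j<k. snd (dg_state f n k) j = fst (dg_state f n k) j)"
  using assms
proof (induction k)
  case 0
  then show ?case by (auto simp: binvecs_def)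
next
  case (Suc k)
  obtain lo up where state: "dg_state f n k = (lo, up)" by fastforce
  with Suc have "lo \<in> binvecs n" "up \<in> binvecs n" "\<forall>j\<ge>k. lo j = 0"
    "\<forall>j. k \<le> j \<and> j < n \<longrightarrow> up j = 1" "\<forall>j<k. up j = lo j" "k < n"
    by auto
  then show ?case
    using state by (auto simp: Let_def less_Suc_eq binvecs_def)
qed

lemma DG_in_binvecs: "DG f n \<in> binvecs n"
  using dg_state_invariant[of n n f] by (simp add: DG_def)

lemma snd_dg_state_final: "snd (dg_state f n n) = DG f n"
proof
  fix j
  show "snd (dg_state f n n) j = DG f n j"
    using dg_state_invariant[of n n f] by (cases "j < n") (auto simp: DG_def binvecs_def)
qed

text \<open>The point \<open>OPT\<^sub>k\<close> of the double greedy analysis: the first \<open>k\<close> decisions of the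
  algorithm followed by the remaining coordinates of \<open>opt\<close>.\<close>
definition dg_hybrid :: "((nat \<Rightarrow> real) \<Rightarrow> real) \<Rightarrow> nat \<Rightarrow> (nat \<Rightarrow> real) \<Rightarrow> nat \<Rightarrow> nat \<Rightarrow> real" where
  "dg_hybrid f n opt k = (\<lambda>j. if j < k then fst (dg_state f n k) j else opt j)"

lemma dg_hybrid_0: "dg_hybrid f n opt 0 = opt"
  by (simp add: dg_hybrid_def)

lemma dg_hybrid_final: "opt \<in> binvecs n \<Longrightarrow> dg_hybrid f n opt n = DG f n"
  using dg_state_invariant[of n n f] by (auto simp: dg_hybrid_def DG_def binvecs_def)

lemma dg_step:
  fixes f :: "(nat \<Rightarrow> real) \<Rightarrow> real"
  assumes "k < n" and "opt \<in> binvecs n"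
  defines "lo \<equiv> fst (dg_state f n k)" and "up \<equiv> snd (dg_state f n k)"
    and "h \<equiv> dg_hybrid f n opt k"
  defines "a \<equiv> f (lo(k := 1)) - f lo" and "b \<equiv> f (up(k := 0)) - f up"
  shows "fst (dg_state f n (Suc k)) = (if a \<ge> b then lo(k := 1) else lo)"
    and "snd (dg_state f n (Suc k)) = (if a \<ge> b then up else up(k := 0))"
    and "dg_hybrid f n opt (Suc k) = h(k := if a \<ge> b then 1 else 0)"
    and "h k = opt k"
    and "lo k = 0" and "up = (up(k := 0))(k := 1)"
    and "lo \<in> binvecs n" and "h(k := 0) \<in> binvecs n" and "up(k := 0) \<in> binvecs n"
    and "\<forall>j. lo j \<le> (h(k := 0)) j" and "\<forall>j. (h(k := 0)) j \<le> (up(k := 0)) j"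
proof -
  have inv: "lo \<in> binvecs n" "up \<in> binvecs n" "\<forall>j\<ge>k. lo j = 0"
    "\<forall>j. k \<le> j \<and> j < n \<longrightarrow> up j = 1" "\<forall>j<k. up j = lo j"
    using dg_state_invariant[of k n f] \<open>k < n\<close> unfolding lo_def up_def by auto
  show lo': "fst (dg_state f n (Suc k)) = (if a \<ge> b then lo(k := 1) else lo)"
    and "snd (dg_state f n (Suc k)) = (if a \<ge> b then up else up(k := 0))"
    unfolding lo_def up_def a_def b_def by (simp_all add: Let_def)
  show "dg_hybrid f n opt (Suc k) = h(k := if a \<ge> b then 1 else 0)"
    unfolding h_def dg_hybrid_def lo' using inv(3) by (auto simp: lo_def less_Suc_eq)
  show "h k = opt k" by (simp add: h_def dg_hybrid_def)
  show "lo k = 0" using inv(3) by simp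
  show "up = (up(k := 0))(k := 1)" using inv(4) \<open>k < n\<close> by auto
  show "lo \<in> binvecs n" by (fact inv(1))
  show "h(k := 0) \<in> binvecs n"
    using inv(1) \<open>opt \<in> binvecs n\<close> by (auto simp: h_def dg_hybrid_def binvecs_def lo_def)
  show "up(k := 0) \<in> binvecs n" using binvecs_fun_upd[OF inv(2) \<open>k < n\<close>] by simp
  show "\<forall>j. lo j \<le> (h(k := 0)) j"
    using inv(3) binvecs_bounds[OF \<open>opt \<in> binvecs n\<close>] by (auto simp: h_def dg_hybrid_def lo_def)
  show "\<forall>j. (h(k := 0)) j \<le> (up(k := 0)) j"
  proof
    fix j
    show "(h(k := 0)) j \<le> (up(k := 0)) j"
      using inv(4,5) \<open>opt \<in> binvecs n\<close> binvecs_bounds[OF inv(2), of j]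
      by (cases "j < n") (auto simp: h_def dg_hybrid_def lo_def binvecs_def)
  qed
qed

lemma dg_hybrid_loss_le:
  assumes "submodular_on_binvecs f n" and "opt \<in> binvecs n" and "k < n"
  shows "f (dg_hybrid f n opt k) - f (dg_hybrid f n opt (Suc k))
    \<le> (f (fst (dg_state f n (Suc k))) - f (fst (dg_state f n k)))
      + (f (snd (dg_state f n (Suc k))) - f (snd (dg_state f n k)))"
proof -
  define lo up h where "lo = fst (dg_state f n k)" and "up = snd (dg_state f n k)"
    and "h = dg_hybrid f n opt k"
  define a b where "a = f (lo(k := 1)) - f lo" and "b = f (up(k := 0)) - f up"
  note step = dg_step[where f = f, OF assms(3,2), folded lo_def up_def h_def, folded a_def b_def]
  have "f ((up(k := 0))(k := 1)) - f (up(k := 0)) \<le> f ((h(k := 0))(k := 1)) - f (h(k := 0))"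
    by (rule submodular_on_binvecsD[OF assms(1) step(8,9) assms(3)]) (use step(11) in auto)
  moreover have "f ((h(k := 0))(k := 1)) - f (h(k := 0)) \<le> f (lo(k := 1)) - f lo"
    by (rule submodular_on_binvecsD[OF assms(1) step(7,8) assms(3)]) (use step(10) in auto)
  ultimately have "- b \<le> f (h(k := 1)) - f (h(k := 0))" "f (h(k := 1)) - f (h(k := 0)) \<le> a"
    using step(6) by (simp_all add: a_def b_def)
  moreover have "h = h(k := 0) \<or> h = h(k := 1)"
  proof -
    have "h k = 0 \<or> h k = 1" using assms(2,3) step(4) by (simp add: binvecs_def)
    then show ?thesis by (metis fun_upd_triv)
  qed
  \<comment> \<open>The marginal of the hybrid lies in \<open>[-b, a]\<close> and \<open>a + b \<ge> 0\<close>, so whichever way the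
    algorithm decides, the hybrid loses at most the gain \<open>max a b\<close> of the two greedy chains.\<close>
  ultimately show ?thesis
    unfolding step(1-3)[unfolded lo_def up_def h_def] lo_def[symmetric] up_def[symmetric] h_def[symmetric]
    by (cases "a \<ge> b") (auto simp: a_def b_def)
qed

lemma dg_hybrid_le_Suc_if_modular:
  assumes "modular_on_binvecs f n" and "opt \<in> binvecs n" and "k < n"
  shows "f (dg_hybrid f n opt k) \<le> f (dg_hybrid f n opt (Suc k))"
proof -
  define lo up h where "lo = fst (dg_state f n k)" and "up = snd (dg_state f n k)"
    and "h = dg_hybrid f n opt k"
  define a b where "a = f (lo(k := 1)) - f lo" and "b = f (up(k := 0)) - f up"
  note step = dg_step[where f = f, OF assms(3,2), folded lo_def up_def h_def, folded a_def b_def]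
  have "f ((up(k := 0))(k := 1)) - f (up(k := 0)) = f (lo(k := 1)) - f lo"
    by (rule modular_on_binvecsD[OF assms(1) step(7,9) assms(3) step(5)]) simp
  moreover have "f ((h(k := 0))(k := 1)) - f (h(k := 0)) = f (lo(k := 1)) - f lo"
    by (rule modular_on_binvecsD[OF assms(1) step(7,8) assms(3) step(5)]) simp
  ultimately have "b = - a" "f (h(k := 1)) - f (h(k := 0)) = a"
    using step(6) by (simp_all add: a_def b_def)
  moreover have "h = h(k := 0) \<or> h = h(k := 1)"
  proof -
    have "h k = 0 \<or> h k = 1" using assms(2,3) step(4) by (simp add: binvecs_def)
    then show ?thesis by (metis fun_upd_triv)
  qed
  ultimately show ?thesis
    unfolding step(3)[unfolded h_def] h_def[symmetric] by (cases "a \<ge> b") auto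
qed

lemma DG_one_third_approx:
  assumes "submodular_on_binvecs f n" and "\<forall>y\<in>binvecs n. 0 \<le> f y" and "opt \<in> binvecs n"
  shows "f opt \<le> 3 * f (DG f n)"
proof -
  define h lo up where "h k = dg_hybrid f n opt k" and "lo k = fst (dg_state f n k)"
    and "up k = snd (dg_state f n k)" for k
  have "f opt - f (DG f n) = (\<Sum>k<n. f (h k) - f (h (Suc k)))"
    using sum_lessThan_telescope'[of "\<lambda>k. f (h k)" n]
    by (simp add: h_def dg_hybrid_0 dg_hybrid_final[OF assms(3)])
  also have "\<dots> \<le> (\<Sum>k<n. (f (lo (Suc k)) - f (lo k)) + (f (up (Suc k)) - f (up k)))"
    unfolding h_def lo_def up_def by (intro sum_mono dg_hybrid_loss_le[OF assms(1,3)]) simp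
  also have "\<dots> = (f (lo n) - f (lo 0)) + (f (up n) - f (up 0))"
    using sum_lessThan_telescope[of "\<lambda>k. f (lo k)" n] sum_lessThan_telescope[of "\<lambda>k. f (up k)" n]
    by (simp only: sum.distrib)
  also have "\<dots> = (f (DG f n) - f (lo 0)) + (f (DG f n) - f (up 0))"
    by (simp add: lo_def up_def DG_def snd_dg_state_final)
  also have "\<dots> \<le> 2 * f (DG f n)"
  proof -
    have "lo 0 \<in> binvecs n" "up 0 \<in> binvecs n"
      using dg_state_invariant[of 0 n f] by (simp_all add: lo_def up_def)
    then have "0 \<le> f (lo 0)" "0 \<le> f (up 0)" using assms(2) by blast+
    then show ?thesis by linarith
  qed
  finally show ?thesis by simp
qed

lemma DG_optimal_if_modular:
  assumes "modular_on_binvecs f n" and "opt \<in> binvecs n"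
  shows "f opt \<le> f (DG f n)"
proof -
  have "k \<le> n \<Longrightarrow> f opt \<le> f (dg_hybrid f n opt k)" for k
  proof (induction k)
    case 0
    then show ?case by (simp add: dg_hybrid_0)
  next
    case (Suc k)
    then show ?case using dg_hybrid_le_Suc_if_modular[OF assms, of k] by simp
  qed
  then show ?thesis using dg_hybrid_final[OF assms(2)] by fastforce
qed

lemma matvec_fun_upd:
  assumes "y k = 0" and "k < n"
  shows "matvec c n (y(k := 1)) = matvec c n y + c k"
proof -
  have "matvec c n (y(k := 1)) = (\<Sum>j<n. y j *\<^sub>R c j + (if j = k then c k else 0))"
    unfolding matvec_def using assms(1) by (intro sum.cong) auto
  also have "\<dots> = matvec c n y + c k"
    unfolding matvec_def sum.distrib using assms(2) by (simp add: sum.delta)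
  finally show ?thesis .
qed

lemma inner_matvec_diff:
  fixes c :: "nat \<Rightarrow> 'r::real_inner"
  shows "(matvec c n y' - matvec c n y) \<bullet> v = (\<Sum>j<n. (y' j - y j) * (c j \<bullet> v))"
  unfolding matvec_def by (simp add: sum_subtractf[symmetric] inner_sum_left algebra_simps)

lemma Theta_nonneg: "0 \<le> Theta F c n x y"
  by (simp add: Theta_def)

lemma Theta_marginal:
  fixes c :: "nat \<Rightarrow> 'r::real_inner"
  assumes "y k = 0" and "k < n"
  shows "Theta F c n x (y(k := 1)) - Theta F c n x y = (c k \<bullet> c k) / 2 - (F x - matvec c n y) \<bullet> c k"
  unfolding Theta_def matvec_fun_upd[of y k n c, OF assms] power2_norm_eq_inner
  by (simp add: algebra_simps inner_diff_left inner_diff_right inner_commute)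

lemma Theta_marginal_diff:
  fixes c :: "nat \<Rightarrow> 'r::real_inner"
  assumes "y k = 0" and "y' k = 0" and "k < n"
  shows "(Theta F c n x (y(k := 1)) - Theta F c n x y) - (Theta F c n x (y'(k := 1)) - Theta F c n x y')
    = (\<Sum>j\<in>{..<n} - {k}. (y j - y' j) * (c j \<bullet> c k))"
proof -
  have "(\<Sum>j<n. (y j - y' j) * (c j \<bullet> c k)) = (\<Sum>j\<in>{..<n} - {k}. (y j - y' j) * (c j \<bullet> c k))"
    using assms by (intro sum.mono_neutral_right) auto
  then show ?thesis
    unfolding Theta_marginal[of y k n F c x, OF assms(1,3)] Theta_marginal[of y' k n F c x, OF assms(2,3)]
    by (simp add: inner_diff_left inner_matvec_diff[symmetric])
qed

lemma Theta_submodular: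
  fixes c :: "nat \<Rightarrow> 'r::real_inner"
  assumes "obtuse c n"
  shows "submodular_on_binvecs (Theta F c n x) n"
  unfolding submodular_on_binvecs_def
proof (intro ballI allI impI)
  fix y y' :: "nat \<Rightarrow> real" and k
  assume y: "y \<in> binvecs n" and "y' \<in> binvecs n" and "k < n"
    and le: "\<forall>j. y j \<le> y' j" and "y' k = 0"
  then have "y k = 0" using binvecs_bounds[OF y, of k] by (metis order_antisym)
  have "0 \<le> (\<Sum>j\<in>{..<n} - {k}. (y j - y' j) * (c j \<bullet> c k))"
    using assms le \<open>k < n\<close> unfolding obtuse_def
    by (intro sum_nonneg) (simp add: mult_nonpos_nonpos)
  then show "Theta F c n x (y'(k := 1)) - Theta F c n x y' \<le> Theta F c n x (y(k := 1)) - Theta F c n x y"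
    using Theta_marginal_diff[where y = y and y' = y' and F = F and x = x and c = c,
        OF \<open>y k = 0\<close> \<open>y' k = 0\<close> \<open>k < n\<close>]
    by linarith
qed

lemma Theta_modular:
  fixes c :: "nat \<Rightarrow> 'r::real_inner"
  assumes "\<forall>i<n. \<forall>j<n. i \<noteq> j \<longrightarrow> c i \<bullet> c j = 0"
  shows "modular_on_binvecs (Theta F c n x) n"
  unfolding modular_on_binvecs_def
proof (intro ballI allI impI)
  fix y y' :: "nat \<Rightarrow> real" and k
  assume "k < n" and "y k = 0" and "y' k = 0"
  have "(\<Sum>j\<in>{..<n} - {k}. (y j - y' j) * (c j \<bullet> c k)) = 0"
    using assms \<open>k < n\<close> by (intro sum.neutral) auto
  then show "Theta F c n x (y'(k := 1)) - Theta F c n x y' = Theta F c n x (y(k := 1)) - Theta F c n x y"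
    using Theta_marginal_diff[where y = y and y' = y' and F = F and x = x and c = c,
        OF \<open>y k = 0\<close> \<open>y' k = 0\<close> \<open>k < n\<close>]
    by linarith
qed

lemma grad_eqI:
  fixes v :: "'a::real_inner"
  assumes "(g has_derivative (\<lambda>h. v \<bullet> h)) (at x)"
  shows "grad g x = v"
  unfolding grad_def
proof (rule the_equality)
  show "(g has_derivative (\<bullet>) v) (at x)" using assms by simp
  fix w assume "(g has_derivative (\<bullet>) w) (at x)"
  then have "(\<lambda>h. w \<bullet> h) = (\<lambda>h. v \<bullet> h)" using has_derivative_unique assms by blast
  then have "(w - v) \<bullet> (w - v) = 0" by (metis inner_diff_left diff_self)
  then show "w = v" by simp
qed

lemma has_derivative_Theta_affine:
  fixes A :: "real^'m^'r" and b :: "real^'r"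
  shows "((\<lambda>x. Theta (\<lambda>x. A *v x + b) c n x y) has_derivative
    (\<lambda>h. ((A *v x + b - matvec c n y) v* A) \<bullet> h)) (at x)"
proof -
  define r where "r x = A *v x + b - matvec c n y" for x
  have lin: "((*v) A has_derivative (*v) A) (at x)"
    by (simp add: bounded_linear_imp_has_derivative)
  then have "(r has_derivative (*v) A) (at x)"
    unfolding r_def by (auto intro!: derivative_eq_intros)
  then have "((\<lambda>x. (1/2) * (r x \<bullet> r x)) has_derivative (\<lambda>h. (1/2) * (r x \<bullet> (A *v h) + (A *v h) \<bullet> r x))) (at x)"
    by (auto intro!: derivative_eq_intros)
  moreover have "(\<lambda>h. (1/2) * (r x \<bullet> (A *v h) + (A *v h) \<bullet> r x)) = (\<lambda>h. (r x v* A) \<bullet> h)"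
    by (simp add: dot_lmul_matrix inner_commute[of "A *v _"])
  ultimately show ?thesis
    by (simp add: Theta_def r_def power2_norm_eq_inner)
qed

lemma grad_Theta_affine:
  fixes A :: "real^'m^'r" and b :: "real^'r"
  shows "grad (\<lambda>x'. Theta (\<lambda>x. A *v x + b) c n x' y) x = (A *v x + b - matvec c n y) v* A"
  by (rule grad_eqI[OF has_derivative_Theta_affine])

lemma Theta_affine_gradient_inequality:
  fixes A :: "real^'m^'r" and b :: "real^'r"
  defines "F \<equiv> \<lambda>x. A *v x + b"
  shows "Theta F c n x y + grad (\<lambda>x'. Theta F c n x' y) x \<bullet> (z - x) \<le> Theta F c n z y"
proof -
  define u d where "u = F x - matvec c n y" and "d = A *v (z - x)"
  have "F z - matvec c n y = u + d"
    unfolding u_def d_def F_def by (simp add: algebra_simps)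
  moreover have "grad (\<lambda>x'. Theta F c n x' y) x \<bullet> (z - x) = u \<bullet> d"
    unfolding F_def grad_Theta_affine u_def d_def by (simp add: dot_lmul_matrix)
  moreover have "(1/2) * (norm (u + d))\<^sup>2 = (1/2) * (norm u)\<^sup>2 + u \<bullet> d + (1/2) * (d \<bullet> d)"
    by (simp add: power2_norm_eq_inner algebra_simps inner_commute)
  ultimately show ?thesis
    unfolding Theta_def u_def[symmetric] by simp
qed

lemma convex_on_if_gradient_inequality:
  fixes f :: "'a::real_inner \<Rightarrow> real"
  assumes "convex S" and "\<And>x z. x \<in> S \<Longrightarrow> z \<in> S \<Longrightarrow> f x + g x \<bullet> (z - x) \<le> f z"
  shows "convex_on S f"
proof (rule convex_onI[OF _ assms(1)])
  fix t :: real and x y assume "0 < t" "t < 1" "x \<in> S" "y \<in> S"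
  define u where "u = (1 - t) *\<^sub>R x + t *\<^sub>R y"
  have "u \<in> S" using \<open>convex S\<close> \<open>x \<in> S\<close> \<open>y \<in> S\<close> \<open>0 < t\<close> \<open>t < 1\<close>
    unfolding u_def by (simp add: convex_alt)
  have "(1 - t) * (g u \<bullet> (x - u)) + t * (g u \<bullet> (y - u)) = g u \<bullet> ((1 - t) *\<^sub>R x + t *\<^sub>R y - u)"
    by (simp add: inner_diff_right algebra_simps)
  then have "(1 - t) * (g u \<bullet> (x - u)) + t * (g u \<bullet> (y - u)) = 0"
    by (simp add: u_def)
  moreover have "(1 - t) * (f u + g u \<bullet> (x - u)) \<le> (1 - t) * f x"
    and "t * (f u + g u \<bullet> (y - u)) \<le> t * f y"
    using assms(2)[OF \<open>u \<in> S\<close>] \<open>x \<in> S\<close> \<open>y \<in> S\<close> \<open>0 < t\<close> \<open>t < 1\<close> by (simp_all add: mult_left_mono)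
  ultimately show "f u \<le> (1 - t) * f x + t * f y"
    by (simp add: algebra_simps)
qed

lemma SUP_Theta_le_DG_if_obtuse:
  fixes c :: "nat \<Rightarrow> 'r::real_inner"
  assumes "obtuse c n"
  shows "(SUP y\<in>binvecs n. Theta F c n x y) \<le> 3 * Theta F c n x (DG (Theta F c n x) n)"
  by (rule cSUP_least[OF binvecs_nonempty], rule DG_one_third_approx[OF Theta_submodular[OF assms]])
    (simp_all add: Theta_nonneg)

lemma SUP_Theta_le_DG_if_orthogonal:
  fixes c :: "nat \<Rightarrow> 'r::real_inner"
  assumes "\<forall>i<n. \<forall>j<n. i \<noteq> j \<longrightarrow> c i \<bullet> c j = 0"
  shows "(SUP y\<in>binvecs n. Theta F c n x y) \<le> Theta F c n x (DG (Theta F c n x) n)"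
  by (rule cSUP_least[OF binvecs_nonempty], rule DG_optimal_if_modular[OF Theta_modular[OF assms]])

lemma projected_gradient_step:
  fixes X :: "'a::euclidean_space set"
  assumes "convex X" and "closed X" and "X \<noteq> {}" and "z \<in> X"
  shows "2 * \<eta> * (g \<bullet> (x - z))
    \<le> (norm (x - z))\<^sup>2 - (norm (closest_point X (x - \<eta> *\<^sub>R g) - z))\<^sup>2 + \<eta>\<^sup>2 * (norm g)\<^sup>2"
proof -
  have "norm (closest_point X (x - \<eta> *\<^sub>R g) - z) \<le> norm ((x - z) - \<eta> *\<^sub>R g)"
    using closest_point_lipschitz[OF assms(1-3), of "x - \<eta> *\<^sub>R g" z] closest_point_self[OF assms(4)]
    by (simp add: dist_norm algebra_simps)
  then have "(norm (closest_point X (x - \<eta> *\<^sub>R g) - z))\<^sup>2 \<le> (norm ((x - z) - \<eta> *\<^sub>R g))\<^sup>2"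
    by (simp add: power_mono)
  also have "\<dots> = (norm (x - z))\<^sup>2 - 2 * \<eta> * (g \<bullet> (x - z)) + \<eta>\<^sup>2 * (norm g)\<^sup>2"
    unfolding power2_norm_eq_inner
    by (simp add: inner_diff_left inner_diff_right algebra_simps inner_commute power2_eq_square)
  finally show ?thesis by simp
qed

lemma projected_gradient_regret:
  fixes X :: "'a::euclidean_space set" and x g :: "nat \<Rightarrow> 'a"
  assumes "convex X" and "closed X" and "X \<noteq> {}" and "z \<in> X" and "\<eta> > 0"
    and "\<And>k. x (Suc k) = closest_point X (x k - \<eta> *\<^sub>R g k)"
    and "\<And>k. k < K \<Longrightarrow> norm (g k) \<le> L"
  shows "(\<Sum>k<K. g k \<bullet> (x k - z)) \<le> (norm (x 0 - z))\<^sup>2 / (2 * \<eta>) + real K * \<eta> * L\<^sup>2 / 2"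
proof -
  define r where "r k = (norm (x k - z))\<^sup>2" for k
  have "g k \<bullet> (x k - z) \<le> (r k - r (Suc k)) / (2 * \<eta>) + \<eta> * L\<^sup>2 / 2" if "k < K" for k
  proof -
    have "(norm (g k))\<^sup>2 \<le> L\<^sup>2"
      using assms(7)[OF that] by (simp add: power_mono)
    then have "2 * \<eta> * (g k \<bullet> (x k - z)) \<le> r k - r (Suc k) + \<eta>\<^sup>2 * L\<^sup>2"
      using projected_gradient_step[OF assms(1-4), of \<eta> "g k" "x k"] assms(6)[of k]
      by (simp add: r_def) (smt (verit) mult_left_mono zero_le_power2)
    then show ?thesis
      using \<open>\<eta> > 0\<close> by (simp add: field_simps power2_eq_square)
  qed
  then have "(\<Sum>k<K. g k \<bullet> (x k - z)) \<le> (\<Sum>k<K. (r k - r (Suc k)) / (2 * \<eta>) + \<eta> * L\<^sup>2 / 2)"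
    by (intro sum_mono) simp
  also have "\<dots> = (r 0 - r K) / (2 * \<eta>) + real K * \<eta> * L\<^sup>2 / 2"
    using sum_lessThan_telescope'[of r K] by (simp add: sum.distrib sum_divide_distrib[symmetric])
  also have "\<dots> \<le> r 0 / (2 * \<eta>) + real K * \<eta> * L\<^sup>2 / 2"
    using \<open>\<eta> > 0\<close> by (simp add: r_def divide_right_mono)
  finally show ?thesis by (simp add: r_def)
qed

lemma SUP_convex_at_average_le:
  fixes \<Theta> :: "'a::real_vector \<Rightarrow> 'b \<Rightarrow> real"
  assumes "finite Y" and "Y \<noteq> {}" and "\<And>y. y \<in> Y \<Longrightarrow> convex_on X (\<lambda>x. \<Theta> x y)"
    and "K > 0" and "\<And>k. k < K \<Longrightarrow> x k \<in> X"
  shows "(SUP y\<in>Y. \<Theta> ((1 / real K) *\<^sub>R (\<Sum>k<K. x k)) y) \<le> (\<Sum>k<K. SUP y\<in>Y. \<Theta> (x k) y) / real K"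
proof (rule cSUP_least[OF assms(2)])
  fix y assume "y \<in> Y"
  have "\<Theta> ((1 / real K) *\<^sub>R (\<Sum>k<K. x k)) y = \<Theta> (\<Sum>k<K. (1 / real K) *\<^sub>R x k) y"
    by (simp add: scaleR_sum_right)
  also have "\<dots> \<le> (\<Sum>k<K. (1 / real K) * \<Theta> (x k) y)"
    using assms(4,5) by (intro convex_on_sum[OF _ _ assms(3)[OF \<open>y \<in> Y\<close>]]) auto
  also have "\<dots> \<le> (\<Sum>k<K. (1 / real K) * (SUP y\<in>Y. \<Theta> (x k) y))"
    using \<open>y \<in> Y\<close> assms(1) by (intro sum_mono mult_left_mono cSUP_upper) auto
  finally show "\<Theta> ((1 / real K) *\<^sub>R (\<Sum>k<K. x k)) y \<le> (\<Sum>k<K. SUP y\<in>Y. \<Theta> (x k) y) / real K"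
    by (simp add: sum_divide_distrib)
qed

lemma approx_minimax_of_no_regret:
  fixes \<Theta> :: "'a::real_vector \<Rightarrow> 'b \<Rightarrow> real" and x :: "nat \<Rightarrow> 'a"
  assumes "finite Y" and "Y \<noteq> {}" and "K > 0"
    and convex: "\<And>y. y \<in> Y \<Longrightarrow> convex_on X (\<lambda>x. \<Theta> x y)"
    and iterates: "\<And>k. k < K \<Longrightarrow> x k \<in> X"
    and "\<alpha> > 0" and best_in: "\<And>x. best x \<in> Y"
    and best_approx: "\<And>x. \<alpha> * (SUP y\<in>Y. \<Theta> x y) \<le> \<Theta> x (best x)"
    and regret: "\<And>z. z \<in> X \<Longrightarrow> (\<Sum>k<K. \<Theta> (x k) (best (x k)) - \<Theta> z (best (x k))) \<le> real K * \<delta>"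
    and "\<delta> \<le> \<alpha> * \<epsilon>"
  defines "xhat \<equiv> (1 / real K) *\<^sub>R (\<Sum>k<K. x k)"
  shows "approx_minimax \<Theta> X Y \<alpha> \<epsilon> xhat (best xhat)"
proof -
  define \<phi> where "\<phi> z = (SUP y\<in>Y. \<Theta> z y)" for z
  have \<Theta>_le_\<phi>: "\<Theta> z y \<le> \<phi> z" if "y \<in> Y" for z y
    unfolding \<phi>_def using that \<open>finite Y\<close> by (intro cSUP_upper) auto
  have "xhat \<in> X"
  proof -
    have "convex X" using convex \<open>Y \<noteq> {}\<close> convex_on_imp_convex by blast
    then have "(\<Sum>k<K. (1 / real K) *\<^sub>R x k) \<in> X"
      using \<open>K > 0\<close> iterates by (intro convex_sum) auto
    then show ?thesis by (simp add: xhat_def scaleR_sum_right)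
  qed
  have gap: "\<alpha> * \<phi> xhat \<le> \<phi> z + \<delta>" if "z \<in> X" for z
  proof -
    have "real K * (\<alpha> * \<phi> xhat) \<le> \<alpha> * (\<Sum>k<K. \<phi> (x k))"
      using SUP_convex_at_average_le[OF \<open>finite Y\<close> \<open>Y \<noteq> {}\<close> convex \<open>K > 0\<close> iterates] \<open>K > 0\<close> \<open>\<alpha> > 0\<close>
      by (simp add: \<phi>_def xhat_def field_simps)
    also have "\<dots> \<le> (\<Sum>k<K. \<Theta> (x k) (best (x k)))"
      unfolding sum_distrib_left \<phi>_def by (intro sum_mono best_approx)
    also have "\<dots> \<le> (\<Sum>k<K. \<Theta> z (best (x k))) + real K * \<delta>"
      using regret[OF that] by (simp add: sum_subtractf)
    also have "\<dots> \<le> real K * \<phi> z + real K * \<delta>"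
      using sum_mono[of "{..<K}" "\<lambda>k. \<Theta> z (best (x k))" "\<lambda>_. \<phi> z"] \<Theta>_le_\<phi> best_in by simp
    finally show ?thesis
      using \<open>K > 0\<close> by (simp add: distrib_left[symmetric])
  qed
  have "\<alpha> * (\<Theta> xhat (best xhat) - \<epsilon>) \<le> (INF z\<in>X. \<phi> z)"
  proof (rule cINF_greatest)
    show "X \<noteq> {}" using \<open>xhat \<in> X\<close> by blast
    fix z assume "z \<in> X"
    have "\<alpha> * \<Theta> xhat (best xhat) \<le> \<alpha> * \<phi> xhat"
      using \<Theta>_le_\<phi>[OF best_in] \<open>\<alpha> > 0\<close> by simp
    then show "\<alpha> * (\<Theta> xhat (best xhat) - \<epsilon>) \<le> \<phi> z"
      using gap[OF \<open>z \<in> X\<close>] \<open>\<delta> \<le> \<alpha> * \<epsilon>\<close> by (simp add: right_diff_distrib)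
  qed
  then have "\<Theta> xhat (best xhat) \<le> (1 / \<alpha>) * (INF z\<in>X. \<phi> z) + \<epsilon>"
    using \<open>\<alpha> > 0\<close> by (simp add: field_simps)
  then show ?thesis
    unfolding approx_minimax_def \<phi>_def using \<open>xhat \<in> X\<close> best_in best_approx by blast
qed

lemma step_count_error_le:
  fixes s \<epsilon> :: real
  assumes "s > 0" and "\<epsilon> > 0"
  defines "K \<equiv> nat \<lceil>9 * (s / (2 * \<epsilon>))\<^sup>2\<rceil>"
  shows "K > 0" and "s / (2 * sqrt (real K)) \<le> \<epsilon> / 3"
proof -
  define q where "q = s / (2 * \<epsilon>)"
  have "q > 0" using assms by (simp add: q_def)
  have "9 * q\<^sup>2 \<le> real K" unfolding K_def q_def by (rule real_nat_ceiling_ge)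
  then show "K > 0" using \<open>q > 0\<close> by (smt (verit) of_nat_0_less_iff zero_less_power)
  have "3 * q = sqrt (9 * q\<^sup>2)" using \<open>q > 0\<close> by (simp add: real_sqrt_mult)
  also have "\<dots> \<le> sqrt (real K)" using \<open>9 * q\<^sup>2 \<le> real K\<close> by (rule real_sqrt_le_mono)
  finally have "3 * q \<le> sqrt (real K)" .
  moreover have "0 < sqrt (real K)" using \<open>K > 0\<close> by simp
  ultimately have "s / (2 * sqrt (real K)) \<le> s / (2 * (3 * q))"
    using \<open>s > 0\<close> \<open>q > 0\<close> by (intro divide_left_mono) auto
  also have "\<dots> = \<epsilon> / 3"
    using assms by (simp add: q_def)
  finally show "s / (2 * sqrt (real K)) \<le> \<epsilon> / 3" .
qed

lemma gd_iter_in_set: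
  assumes "closed X" and "X \<noteq> {}" and "x0 \<in> X"
  shows "gd_iter X \<Theta> n K x0 k \<in> X"
  by (cases k) (simp_all add: assms Let_def closest_point_in_set)

lemma gd_iter_regret:
  fixes X :: "(real ^ 'm) set" and A :: "real ^ 'm ^ 'r" and b :: "real ^ 'r"
    and c :: "nat \<Rightarrow> real ^ 'r" and n K :: nat and x0 :: "real ^ 'm"
  defines "F \<equiv> \<lambda>x. A *v x + b"
  defines "xs \<equiv> gd_iter X (Theta F c n) n K x0"
  defines "best \<equiv> \<lambda>x. DG (Theta F c n x) n"
  assumes "convex X" and "compact X" and "x0 \<in> X" and "z \<in> X" and "K > 0"
    and grad_bound: "\<forall>y\<in>binvecs n. \<forall>x\<in>X. norm (grad (\<lambda>x'. Theta F c n x' y) x) \<le> L"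
  shows "(\<Sum>k<K. Theta F c n (xs k) (best (xs k)) - Theta F c n z (best (xs k)))
    \<le> real K * (((diameter X)\<^sup>2 + L\<^sup>2) / (2 * sqrt (real K)))"
proof -
  define \<eta> where "\<eta> = 1 / sqrt (real K)"
  define g where "g k = grad (\<lambda>x'. Theta F c n x' (best (xs k))) (xs k)" for k
  have "closed X" and "X \<noteq> {}" and "bounded X"
    using \<open>compact X\<close> \<open>x0 \<in> X\<close> compact_imp_closed compact_imp_bounded by blast+
  have xs_in: "xs k \<in> X" for k
    unfolding xs_def by (rule gd_iter_in_set[OF \<open>closed X\<close> \<open>X \<noteq> {}\<close> \<open>x0 \<in> X\<close>])
  have "Theta F c n x y - Theta F c n z y \<le> grad (\<lambda>x'. Theta F c n x' y) x \<bullet> (x - z)" for x y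
    using Theta_affine_gradient_inequality[of A b c n x y z]
    unfolding F_def by (simp add: inner_diff_right)
  then have "(\<Sum>k<K. Theta F c n (xs k) (best (xs k)) - Theta F c n z (best (xs k)))
      \<le> (\<Sum>k<K. g k \<bullet> (xs k - z))"
    unfolding g_def by (intro sum_mono)
  also have "\<dots> \<le> (norm (xs 0 - z))\<^sup>2 / (2 * \<eta>) + real K * \<eta> * L\<^sup>2 / 2"
  proof (rule projected_gradient_regret[OF \<open>convex X\<close> \<open>closed X\<close> \<open>X \<noteq> {}\<close> \<open>z \<in> X\<close>])
    show "\<eta> > 0" using \<open>K > 0\<close> by (simp add: \<eta>_def)
    show "xs (Suc k) = closest_point X (xs k - \<eta> *\<^sub>R g k)" for k
      by (simp add: xs_def g_def \<eta>_def best_def Let_def)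
    show "norm (g k) \<le> L" for k
      using grad_bound xs_in DG_in_binvecs by (simp add: g_def best_def)
  qed
  also have "\<dots> \<le> (diameter X)\<^sup>2 / (2 * \<eta>) + real K * \<eta> * L\<^sup>2 / 2"
  proof -
    have "norm (xs 0 - z) \<le> diameter X"
      using diameter_bounded_bound[OF \<open>bounded X\<close> \<open>x0 \<in> X\<close> \<open>z \<in> X\<close>] by (simp add: xs_def dist_norm)
    then show ?thesis
      using \<open>K > 0\<close> by (simp add: \<eta>_def power_mono divide_right_mono)
  qed
  also have "\<dots> = real K * (((diameter X)\<^sup>2 + L\<^sup>2) / (2 * sqrt (real K)))"
    using \<open>K > 0\<close> by (simp add: \<eta>_def field_simps real_sqrt_mult[symmetric])
  finally show ?thesis .
qed

lemma gd_iter_DG_approx_minimax: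
  fixes X :: "(real ^ 'm) set" and A :: "real ^ 'm ^ 'r" and b :: "real ^ 'r"
    and c :: "nat \<Rightarrow> real ^ 'r" and n :: nat and L \<epsilon> \<alpha> :: real and x0 :: "real ^ 'm"
  defines "F \<equiv> (\<lambda>x. A *v x + b)"
  defines "D \<equiv> diameter X"
  defines "K \<equiv> nat \<lceil>9 * ((D\<^sup>2 + L\<^sup>2) / (2 * \<epsilon>))\<^sup>2\<rceil>"
  defines "xs \<equiv> gd_iter X (Theta F c n) n K x0"
  defines "xhat \<equiv> (1 / real K) *\<^sub>R (\<Sum>k<K. xs k)"
  defines "yhat \<equiv> DG (Theta F c n xhat) n"
  assumes "convex X" and "compact X" and "D > 0" and "\<epsilon> > 0" and "x0 \<in> X"
    and grad_bound: "\<forall>y\<in>binvecs n. \<forall>x\<in>X. norm (grad (\<lambda>x'. Theta F c n x' y) x) \<le> L"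
    and "1/3 \<le> \<alpha>"
    and DG_approx: "\<And>x. \<alpha> * (SUP y\<in>binvecs n. Theta F c n x y) \<le> Theta F c n x (DG (Theta F c n x) n)"
  shows "approx_minimax (Theta F c n) X (binvecs n) \<alpha> \<epsilon> xhat yhat"
proof -
  define \<delta> where "\<delta> = (D\<^sup>2 + L\<^sup>2) / (2 * sqrt (real K))"
  have "K > 0" and "\<delta> \<le> \<epsilon> / 3"
    using step_count_error_le[of "D\<^sup>2 + L\<^sup>2" \<epsilon>] \<open>D > 0\<close> \<open>\<epsilon> > 0\<close>
    unfolding K_def \<delta>_def by (simp_all add: add_pos_nonneg)
  have convex: "convex_on X (\<lambda>x. Theta F c n x y)" for y
    unfolding F_def
    by (rule convex_on_if_gradient_inequality[OF \<open>convex X\<close>], rule Theta_affine_gradient_inequality)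
  show ?thesis
    unfolding yhat_def xhat_def
  proof (rule approx_minimax_of_no_regret[OF finite_binvecs binvecs_nonempty \<open>K > 0\<close> convex])
    show "xs k \<in> X" for k
      unfolding xs_def using \<open>compact X\<close> \<open>x0 \<in> X\<close> by (intro gd_iter_in_set) (auto intro: compact_imp_closed)
    show "(\<Sum>k<K. Theta F c n (xs k) (DG (Theta F c n (xs k)) n) - Theta F c n z (DG (Theta F c n (xs k)) n))
      \<le> real K * \<delta>" if "z \<in> X" for z
      using gd_iter_regret[OF \<open>convex X\<close> \<open>compact X\<close> \<open>x0 \<in> X\<close> that \<open>K > 0\<close> grad_bound[unfolded F_def]]
      unfolding F_def xs_def \<delta>_def D_def .
    show "\<delta> \<le> \<alpha> * \<epsilon>"
      using \<open>\<delta> \<le> \<epsilon> / 3\<close> mult_right_mono[OF \<open>1/3 \<le> \<alpha>\<close> less_imp_le[OF \<open>\<epsilon> > 0\<close>]] by linarith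
  qed (use \<open>1/3 \<le> \<alpha>\<close> DG_approx DG_in_binvecs in auto)
qed

theorem mainTheorem10:
  fixes X :: "(real ^ 'm) set" and A :: "real ^ 'm ^ 'r" and b :: "real ^ 'r"
    and c :: "nat \<Rightarrow> real ^ 'r" and n :: nat and L \<epsilon> :: real and x0 :: "real ^ 'm"
  defines "F \<equiv> (\<lambda>x. A *v x + b)"
  defines "D \<equiv> diameter X"
  defines "K \<equiv> nat \<lceil>9 * ((D\<^sup>2 + L\<^sup>2) / (2 * \<epsilon>))\<^sup>2\<rceil>"
  defines "xs \<equiv> gd_iter X (Theta F c n) n K x0"
  defines "xhat \<equiv> (1 / real K) *\<^sub>R (\<Sum>k<K. xs k)"
  defines "yhat \<equiv> DG (Theta F c n xhat) n"
  assumes "X \<noteq> {}" and "convex X" and "compact X" and "D > 0"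
    and "\<forall>j<n. c j \<noteq> 0"
    and "L > 0"
    and "\<forall>y\<in>binvecs n. L-lipschitz_on X (\<lambda>x. Theta F c n x y)"
    and "\<forall>y\<in>binvecs n. \<forall>x\<in>X. norm (grad (\<lambda>x'. Theta F c n x' y) x) \<le> L"
    and "\<epsilon> > 0"
    and "x0 \<in> X"
  shows "(obtuse c n \<longrightarrow> approx_minimax (Theta F c n) X (binvecs n) (1/3) \<epsilon> xhat yhat)
       \<and> ((\<forall>i<n. \<forall>j<n. i \<noteq> j \<longrightarrow> c i \<bullet> c j = 0) \<longrightarrow>
            approx_minimax (Theta F c n) X (binvecs n) 1 \<epsilon> xhat yhat)"
proof (intro conjI impI)
  assume "obtuse c n"
  then show "approx_minimax (Theta F c n) X (binvecs n) (1/3) \<epsilon> xhat yhat"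
    using SUP_Theta_le_DG_if_obtuse[of c n F] assms
    unfolding F_def D_def K_def xs_def xhat_def yhat_def
    by (intro gd_iter_DG_approx_minimax) (auto simp: mult.commute)
next
  assume "\<forall>i<n. \<forall>j<n. i \<noteq> j \<longrightarrow> c i \<bullet> c j = 0"
  then show "approx_minimax (Theta F c n) X (binvecs n) 1 \<epsilon> xhat yhat"
    using SUP_Theta_le_DG_if_orthogonal[of n c F] assms
    unfolding F_def D_def K_def xs_def xhat_def yhat_def
    by (intro gd_iter_DG_approx_minimax) auto
qed

end
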